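(* Fix an integer $k\ge 3$ and $\epsilon>0$. There is no $\epsilon$-edge locally differentially private algorithm (interactive or not) that estimates the number $C_k(G)$ of $k$-cycles in every graph $G$ on $n$ nodes with expected $\ell_2$-error $o(n^{k-1.5})$ (as $n\to\infty$).
   Context: $C_k(G)$ is the number of subgraphs of $G$ isomorphic to the cycle on $k$ vertices. Users are the nodes $v_1,\dots,v_n$; user $v_i$ knows only its adjacency vector $a_i\in\{0,1\}^n$. Two adjacency vectors are neighboring if they differ in exactly one bit. A randomized query $\mathcal{R}$ is $\epsilon'$-edge locally differentially private for a user if for all neighboring $a,a'$ and all sets $S$ of outcomes, $\Pr[\mathcal{R}(a)\in S]\le e^{\epsilon'}\Pr[\mathcal{R}(a')\in S]$. An algorithm is $\epsilon$-edge locally differentially private if, for every user $v_i$ and every sequence of queries $\mathcal{R}_1,\dots,\mathcal{R}_\kappa$ it poses to $v_i$ (possibly chosen adaptively), where $\mathcal{R}_j$ is $\epsilon_j$-edge locally differentially private, we have $\epsilon_1+\cdots+\epsilon_\kappa\le\epsilon$. The expected $\ell_2$-error of an estimate $\tilde C$ of $C_k(G)$ is $\sqrt{\mathbb{E}[(\tilde C - C_k(G))^2]}$. *)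

theory Defs
  imports "HOL-Probability.Probability"
begin

text \<open>Graphs on the node set {0..<n}: a symmetric, irreflexive adjacency relation
  that vanishes outside {0..<n}.  The adjacency vector of user v_i is G i
  (bits at positions \<ge> n are always False).\<close>

definition graph_on :: "nat \<Rightarrow> (nat \<Rightarrow> nat \<Rightarrow> bool) \<Rightarrow> bool" where
  "graph_on n G \<longleftrightarrow> (\<forall>i j. G i j \<longrightarrow> i < n \<and> j < n) \<and> (\<forall>i j. G i j = G j i) \<and> (\<forall>i. \<not> G i i)"

text \<open>C_k(G): number of subgraphs isomorphic to the k-cycle, counted as the number of
  distinct edge sets {{v_0,v_1},...,{v_(k-1),v_0}} of k-cycles in G.\<close>

definition cycle_count :: "nat \<Rightarrow> nat \<Rightarrow> (nat \<Rightarrow> nat \<Rightarrow> bool) \<Rightarrow> nat" where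
  "cycle_count k n G = card
     {{{v j, v ((j + 1) mod k)} | j. j < k} | v.
        inj_on v {0..<k} \<and> (\<forall>j<k. v j < n) \<and> (\<forall>j<k. G (v j) (v ((j + 1) mod k)))}"

definition neighboring :: "nat \<Rightarrow> (nat \<Rightarrow> bool) \<Rightarrow> (nat \<Rightarrow> bool) \<Rightarrow> bool" where
  "neighboring n a a' \<longleftrightarrow> (\<forall>j\<ge>n. \<not> a j \<and> \<not> a' j) \<and> card {j. a j \<noteq> a' j} = 1"

definition edge_ldp :: "nat \<Rightarrow> real \<Rightarrow> 'o measure \<Rightarrow> ((nat \<Rightarrow> bool) \<Rightarrow> 'o measure) \<Rightarrow> bool" where
  "edge_ldp n e Out R \<longleftrightarrow>
     (\<forall>a a'. neighboring n a a' \<longrightarrow>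
        (\<forall>S\<in>sets Out. measure (R a) S \<le> exp e * measure (R a') S))"

text \<open>Ask i Out R k: pose the randomized query R (output space Out) to user i; continue
  with k y on answer y (the choice of the next query may depend on the whole
  transcript).  Server-side randomness is a query
  that ignores its input (privacy cost 0).\<close>

datatype 'o protocol =
    Est real
  | Ask nat "'o measure" "(nat \<Rightarrow> bool) \<Rightarrow> 'o measure" "'o \<Rightarrow> 'o protocol"

primrec run :: "'o protocol \<Rightarrow> (nat \<Rightarrow> nat \<Rightarrow> bool) \<Rightarrow> real measure" where
  "run (Est x) G = return borel x"
| "run (Ask i Out R k) G = Giry_Monad.bind (R (G i)) (\<lambda>y. run (k y) G)"

text \<open>valid n b P: P is a well-formed protocol for users v_0..v_(n-1) such that along
  every transcript the privacy budgets spent on user i sum to at most b i.\<close>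

inductive valid :: "nat \<Rightarrow> (nat \<Rightarrow> real) \<Rightarrow> 'o protocol \<Rightarrow> bool" where
  valid_Est: "valid n b (Est x)"
| valid_Ask: "\<lbrakk> i < n; 0 \<le> e; e \<le> b i;
      \<forall>a. R a \<in> space (prob_algebra Out);
      edge_ldp n e Out R;
      \<forall>G. (\<lambda>y. run (k y) G) \<in> Out \<rightarrow>\<^sub>M prob_algebra borel;
      \<forall>y. valid n (b(i := b i - e)) (k y) \<rbrakk>
    \<Longrightarrow> valid n b (Ask i Out R k)"

definition eps_edge_ldp_alg :: "real \<Rightarrow> nat \<Rightarrow> 'o protocol \<Rightarrow> bool" where
  "eps_edge_ldp_alg \<epsilon> n P \<longleftrightarrow> valid n (\<lambda>_. \<epsilon>) P"

definition sq_error :: "'o protocol \<Rightarrow> (nat \<Rightarrow> nat \<Rightarrow> bool) \<Rightarrow> real \<Rightarrow> ennreal" where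
  "sq_error P G c = (\<integral>\<^sup>+ x. ennreal ((x - c)\<^sup>2) \<partial>run P G)"

end

theory Submission
  imports Defs
begin

(* Hard instances: the complete graph on n vertices from which the matching edges
  {2j, 2j+1}, j < m = n div 4, are removed except for j in S.  Putting back one edge creates at
  least t^(k-2) new k-cycles, with t = (n - 2m) div (k-2), so C_k increases by at least
  N = t^(k-2) in every coordinate of the cube of sets S.  The bit "j in S" is visible only to
  the users 2j and 2j+1, whose total privacy budget is 2 eps; hence along every transcript the
  likelihood ratio between "j in S" and "j not in S" stays in [exp (-2 eps), exp (2 eps)].
  Following the protocol tree with these ratios as product weights on the cube, a weighted
  Poincare inequality bounds the Bayes squared error under the uniform prior on S from below
  by N^2 m / (4 exp (2 eps)), which is of order n^(2k-3).  An error of o(n^(k-3/2)) would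
  make the squared error o(n^(2k-3)). *)

lemma sum_Pow_insert:
  assumes "finite J" "a \<notin> J"
  shows "(\<Sum>S\<in>Pow (insert a J). g S) = (\<Sum>S\<in>Pow J. g S + g (insert a S))"
proof -
  have "Pow J \<inter> insert a ` Pow J = {}" "inj_on (insert a) (Pow J)"
    using assms by (auto simp: inj_on_def)
  then show ?thesis
    by (simp add: Pow_insert sum.union_disjoint assms sum.reindex sum.distrib)
qed

lemma sum_Pow_prod_eq_prod_add_one:
  fixes r :: "'a \<Rightarrow> 'b::comm_semiring_1"
  assumes "finite J"
  shows "(\<Sum>S\<in>Pow J. prod r S) = (\<Prod>j\<in>J. 1 + r j)"
  using prod_add[OF assms, of r "\<lambda>_. 1"] by (simp add: add.commute)

lemma two_point_sq_dist_eq: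
  fixes r z \<alpha> \<beta> :: real
  assumes "0 \<le> r"
  shows "(z - \<alpha>)\<^sup>2 + r * (z - \<beta>)\<^sup>2
       = (1 + r) * (z - (\<alpha> + r * \<beta>) / (1 + r))\<^sup>2 + r / (1 + r) * (\<beta> - \<alpha>)\<^sup>2"
proof -
  define T where "T = 1 + r"
  have T: "T \<noteq> 0" using assms by (simp add: T_def)
  have "z - (\<alpha> + r * \<beta>) / T = (T * z - \<alpha> - r * \<beta>) / T"
    using T by (simp add: field_simps)
  then have "T * (z - (\<alpha> + r * \<beta>) / T)\<^sup>2 + r / T * (\<beta> - \<alpha>)\<^sup>2
      = ((T * z - \<alpha> - r * \<beta>)\<^sup>2 + r * (\<beta> - \<alpha>)\<^sup>2) / T"
    using T by (simp add: power2_eq_square field_simps)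
  also have "(T * z - \<alpha> - r * \<beta>)\<^sup>2 + r * (\<beta> - \<alpha>)\<^sup>2 = T * ((z - \<alpha>)\<^sup>2 + r * (z - \<beta>)\<^sup>2)"
    by (simp add: T_def power2_eq_square algebra_simps)
  finally show ?thesis using T by (simp add: T_def)
qed

lemma sum_Pow_prod_sq_dist_ge:
  fixes f :: "'a set \<Rightarrow> real"
  assumes "finite J" "\<forall>j\<in>J. 0 \<le> r j" "0 \<le> N"
    and "\<forall>S\<subseteq>J. \<forall>j\<in>J-S. N \<le> f (insert j S) - f S"
  shows "N\<^sup>2 * (\<Sum>j\<in>J. r j / (1 + r j)\<^sup>2) * (\<Prod>j\<in>J. 1 + r j)
     \<le> (\<Sum>S\<in>Pow J. prod r S * (z - f S)\<^sup>2)"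
  using assms
proof (induction J arbitrary: f rule: finite_induct)
  case empty
  then show ?case by simp
next
  case (insert a J)
  define \<rho> where "\<rho> = r a"
  have r: "\<forall>j\<in>J. 0 \<le> r j" and \<rho>: "0 \<le> \<rho>"
    using insert.prems by (auto simp: \<rho>_def)
  \<comment> \<open>Averaging out the coordinate \<open>a\<close> leaves a function on the smaller cube with the
    same increment bound; the two-point variance decomposition accounts for the loss.\<close>
  define g where "g S = (f S + \<rho> * f (insert a S)) / (1 + \<rho>)" for S
  have g_inc: "\<forall>S\<subseteq>J. \<forall>j\<in>J-S. N \<le> g (insert j S) - g S"
  proof (intro allI impI ballI)
    fix S j assume S: "S \<subseteq> J" and j: "j \<in> J - S"
    have d1: "N \<le> f (insert j S) - f S"
      and d2: "N \<le> f (insert j (insert a S)) - f (insert a S)"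
      using insert.prems(3) S j insert.hyps(2) by (auto dest: spec[of _ "insert a S"])
    have "(1 + \<rho>) * N \<le> (f (insert j S) - f S) + \<rho> * (f (insert j (insert a S)) - f (insert a S))"
      using d1 mult_left_mono[OF d2 \<rho>] by (simp add: algebra_simps)
    moreover have "g (insert j S) - g S
        = ((f (insert j S) - f S) + \<rho> * (f (insert j (insert a S)) - f (insert a S))) / (1 + \<rho>)"
      unfolding g_def by (simp add: insert_commute diff_divide_distrib[symmetric] algebra_simps)
    ultimately show "N \<le> g (insert j S) - g S"
      using \<rho> by (simp add: pos_le_divide_eq mult.commute)
  qed
  have split: "prod r S * ((1 + \<rho>) * (z - g S)\<^sup>2 + \<rho> / (1 + \<rho>) * N\<^sup>2)
      \<le> prod r S * (z - f S)\<^sup>2 + prod r (insert a S) * (z - f (insert a S))\<^sup>2" if S: "S \<subseteq> J" for S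
  proof -
    have "N \<le> f (insert a S) - f S" using insert.prems(3) S insert.hyps(2) by auto
    then have N2: "\<rho> / (1 + \<rho>) * N\<^sup>2 \<le> \<rho> / (1 + \<rho>) * (f (insert a S) - f S)\<^sup>2"
      using \<rho> insert.prems(2) by (intro mult_left_mono power_mono) auto
    have "0 \<le> prod r S" using S r by (auto intro!: prod_nonneg)
    then have "prod r S * ((1 + \<rho>) * (z - g S)\<^sup>2 + \<rho> / (1 + \<rho>) * N\<^sup>2)
        \<le> prod r S * ((1 + \<rho>) * (z - g S)\<^sup>2 + \<rho> / (1 + \<rho>) * (f (insert a S) - f S)\<^sup>2)"
      by (rule mult_left_mono[OF add_left_mono[OF N2]])
    also have "\<dots> = prod r S * ((z - f S)\<^sup>2 + \<rho> * (z - f (insert a S))\<^sup>2)"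
      unfolding g_def two_point_sq_dist_eq[OF \<rho>] ..
    also have "\<dots> = prod r S * (z - f S)\<^sup>2 + prod r (insert a S) * (z - f (insert a S))\<^sup>2"
      using S insert.hyps finite_subset by (subst prod.insert) (auto simp: \<rho>_def algebra_simps)
    finally show ?thesis .
  qed
  have IH: "N\<^sup>2 * (\<Sum>j\<in>J. r j / (1 + r j)\<^sup>2) * (\<Prod>j\<in>J. 1 + r j)
      \<le> (\<Sum>S\<in>Pow J. prod r S * (z - g S)\<^sup>2)"
    using insert.IH[of g] r insert.prems(2) g_inc by blast
  define s where "s = (\<Sum>j\<in>J. r j / (1 + r j)\<^sup>2)"
  define p where "p = (\<Prod>j\<in>J. 1 + r j)"
  have "N\<^sup>2 * (\<Sum>j\<in>insert a J. r j / (1 + r j)\<^sup>2) * (\<Prod>j\<in>insert a J. 1 + r j)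
      = N\<^sup>2 * (\<rho> / (1 + \<rho>)\<^sup>2 + s) * ((1 + \<rho>) * p)"
    using insert.hyps by (simp add: \<rho>_def s_def p_def)
  also have "\<dots> = (1 + \<rho>) * (N\<^sup>2 * s * p) + \<rho> / (1 + \<rho>) * N\<^sup>2 * p"
  proof -
    have "1 + \<rho> \<noteq> 0" using \<rho> by simp
    then show ?thesis by (simp add: field_simps) (simp add: power2_eq_square algebra_simps)
  qed
  also have "\<dots> \<le> (1 + \<rho>) * (\<Sum>S\<in>Pow J. prod r S * (z - g S)\<^sup>2) + \<rho> / (1 + \<rho>) * N\<^sup>2 * p"
    using IH \<rho> unfolding s_def p_def by simp
  also have "\<dots> = (\<Sum>S\<in>Pow J. prod r S * ((1 + \<rho>) * (z - g S)\<^sup>2 + \<rho> / (1 + \<rho>) * N\<^sup>2))"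
    unfolding p_def sum_Pow_prod_eq_prod_add_one[OF insert.hyps(1), symmetric]
    by (simp add: sum.distrib sum_distrib_left sum_distrib_right sum_divide_distrib algebra_simps)
  also have "\<dots> \<le> (\<Sum>S\<in>Pow (insert a J). prod r S * (z - f S)\<^sup>2)"
    unfolding sum_Pow_insert[OF insert.hyps] using split by (intro sum_mono) auto
  finally show ?case .
qed

lemma div_one_plus_sq_ge:
  fixes x a :: real
  assumes "exp (- a) \<le> x" "x \<le> exp a"
  shows "1 / (4 * exp a) \<le> x / (1 + x)\<^sup>2"
proof -
  have x: "0 < x" using assms(1) exp_gt_zero order.strict_trans2 by blast
  have xa: "1 \<le> x * exp a" using assms(1) by (simp add: exp_minus field_simps)
  have "(1 + x)\<^sup>2 \<le> 4 * exp a * x"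
  proof (cases "x \<le> 1")
    case True
    then have "(1 + x)\<^sup>2 \<le> 2\<^sup>2" using x by (intro power_mono) auto
    then show ?thesis using xa by (simp add: mult.commute)
  next
    case False
    then have "(1 + x)\<^sup>2 \<le> (2 * x)\<^sup>2" by (intro power_mono) auto
    also have "\<dots> = 4 * x * x" by (simp add: power2_eq_square)
    also have "\<dots> \<le> 4 * exp a * x" using assms(2) x by simp
    finally show ?thesis .
  qed
  then show ?thesis using x by (simp add: field_simps)
qed

text \<open>\<open>b\<close> is the remaining privacy budget per user, so \<open>spent_on_pair \<epsilon> b j\<close> is the budget
  already spent on the two users who see bit \<open>j\<close>; \<open>r j\<close> stands for the likelihood ratio of
  the transcript so far between \<open>j \<in> S\<close> and \<open>j \<notin> S\<close>.\<close>

definition spent_on_pair :: "real \<Rightarrow> (nat \<Rightarrow> real) \<Rightarrow> nat \<Rightarrow> real" where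
  "spent_on_pair \<epsilon> b j = 2 * \<epsilon> - b (2 * j) - b (2 * j + 1)"

definition likelihood_ratios_bounded :: "real \<Rightarrow> (nat \<Rightarrow> real) \<Rightarrow> nat \<Rightarrow> (nat \<Rightarrow> real) \<Rightarrow> bool" where
  "likelihood_ratios_bounded \<epsilon> b m r \<longleftrightarrow>
     (\<forall>j<m. exp (- spent_on_pair \<epsilon> b j) \<le> r j \<and> r j \<le> exp (spent_on_pair \<epsilon> b j))"

lemma likelihood_ratios_bounded_nonneg:
  "likelihood_ratios_bounded \<epsilon> b m r \<Longrightarrow> j < m \<Longrightarrow> 0 \<le> r j"
  unfolding likelihood_ratios_bounded_def by (meson exp_ge_zero order_trans)

lemma sum_Pow_prod_sq_dist_ge_spent:
  fixes f :: "nat set \<Rightarrow> real"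
  assumes "0 \<le> N" "\<forall>S\<subseteq>{..<m}. \<forall>j\<in>{..<m}-S. N \<le> f (insert j S) - f S"
    and "\<forall>i. 0 \<le> b i" "likelihood_ratios_bounded \<epsilon> b m r"
  shows "(\<Prod>j<m. 1 + r j) * (N\<^sup>2 * (m / (4 * exp (2 * \<epsilon>))))
     \<le> (\<Sum>S\<in>Pow {..<m}. prod r S * (z - f S)\<^sup>2)"
proof -
  have r: "\<forall>j\<in>{..<m}. 0 \<le> r j"
    using likelihood_ratios_bounded_nonneg[OF assms(4)] by simp
  have "m / (4 * exp (2 * \<epsilon>)) = (\<Sum>j<m. 1 / (4 * exp (2 * \<epsilon>)))" by simp
  also have "\<dots> \<le> (\<Sum>j<m. r j / (1 + r j)\<^sup>2)"
  proof (intro sum_mono order_trans[OF _ div_one_plus_sq_ge])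
    fix j assume "j \<in> {..<m}"
    then show "exp (- spent_on_pair \<epsilon> b j) \<le> r j" "r j \<le> exp (spent_on_pair \<epsilon> b j)"
      using assms(4) by (auto simp: likelihood_ratios_bounded_def)
    have "spent_on_pair \<epsilon> b j \<le> 2 * \<epsilon>"
      using assms(3)[rule_format, of "2 * j"] assms(3)[rule_format, of "2 * j + 1"]
      by (simp add: spent_on_pair_def)
    then show "1 / (4 * exp (2 * \<epsilon>)) \<le> 1 / (4 * exp (spent_on_pair \<epsilon> b j))"
      by (simp add: divide_le_eq)
  qed
  finally have "N\<^sup>2 * (m / (4 * exp (2 * \<epsilon>))) \<le> N\<^sup>2 * (\<Sum>j<m. r j / (1 + r j)\<^sup>2)"
    by (rule mult_left_mono) simp
  moreover have "0 \<le> (\<Prod>j<m. 1 + r j)" using r by (intro prod_nonneg) auto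
  ultimately have "(\<Prod>j<m. 1 + r j) * (N\<^sup>2 * (m / (4 * exp (2 * \<epsilon>))))
      \<le> (\<Prod>j<m. 1 + r j) * (N\<^sup>2 * (\<Sum>j<m. r j / (1 + r j)\<^sup>2))"
    by (rule mult_left_mono)
  also have "\<dots> = N\<^sup>2 * (\<Sum>j<m. r j / (1 + r j)\<^sup>2) * (\<Prod>j<m. 1 + r j)"
    by (simp add: ac_simps)
  also have "\<dots> \<le> (\<Sum>S\<in>Pow {..<m}. prod r S * (z - f S)\<^sup>2)"
    using sum_Pow_prod_sq_dist_ge[OF _ r assms(1,2)] by simp
  finally show ?thesis .
qed

lemma spent_on_pair_upd:
  "spent_on_pair \<epsilon> (b(i := x)) j = (if i div 2 = j then spent_on_pair \<epsilon> b j + b i - x else spent_on_pair \<epsilon> b j)"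
  unfolding spent_on_pair_def by auto

lemma likelihood_ratios_bounded_upd:
  assumes "likelihood_ratios_bounded \<epsilon> b m r" "exp (- e) \<le> c" "c \<le> exp e"
  shows "likelihood_ratios_bounded \<epsilon> (b(i := b i - e)) m (r(i div 2 := r (i div 2) * c))"
  unfolding likelihood_ratios_bounded_def
proof (intro allI impI)
  fix j assume j: "j < m"
  define s where "s = spent_on_pair \<epsilon> b j"
  have r: "exp (- s) \<le> r j" "r j \<le> exp s"
    using assms(1) j by (auto simp: likelihood_ratios_bounded_def s_def)
  show "exp (- spent_on_pair \<epsilon> (b(i := b i - e)) j) \<le> (r(i div 2 := r (i div 2) * c)) j \<and>
        (r(i div 2 := r (i div 2) * c)) j \<le> exp (spent_on_pair \<epsilon> (b(i := b i - e)) j)"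
  proof (cases "i div 2 = j")
    case True
    have "0 \<le> r j" "0 \<le> c"
      using r(1) assms(2) exp_ge_zero order_trans by metis+
    then have "exp (- s) * exp (- e) \<le> r j * c" "r j * c \<le> exp s * exp e"
      using r assms(2,3) by (auto intro!: mult_mono)
    then show ?thesis
      using True by (simp add: spent_on_pair_upd s_def exp_add[symmetric])
  qed (use r in \<open>simp add: spent_on_pair_upd s_def\<close>)
qed

lemma AE_le_if_nn_integral_indicator_le:
  assumes [measurable]: "u \<in> borel_measurable M" "v \<in> borel_measurable M"
    and fin: "(\<integral>\<^sup>+x. v x \<partial>M) \<noteq> \<infinity>"
    and le: "\<And>A. A \<in> sets M \<Longrightarrow> (\<integral>\<^sup>+x. u x * indicator A x \<partial>M) \<le> (\<integral>\<^sup>+x. v x * indicator A x \<partial>M)"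
  shows "AE x in M. u x \<le> v x"
proof -
  define A where "A = {x\<in>space M. v x < u x}"
  have A[measurable]: "A \<in> sets M" unfolding A_def by measurable
  have "(\<integral>\<^sup>+x. v x * indicator A x \<partial>M) \<le> (\<integral>\<^sup>+x. v x \<partial>M)"
    by (intro nn_integral_mono) (auto split: split_indicator)
  then have fin_A: "(\<integral>\<^sup>+x. v x * indicator A x \<partial>M) \<noteq> \<infinity>"
    using fin by (auto simp: top_unique)
  have "AE x in M. u x * indicator A x \<le> v x * indicator A x"
  proof (rule ccontr)
    assume "\<not> (AE x in M. u x * indicator A x \<le> v x * indicator A x)"
    then have "(\<integral>\<^sup>+x. v x * indicator A x \<partial>M) < (\<integral>\<^sup>+x. u x * indicator A x \<partial>M)"
      by (intro nn_integral_less[OF _ _ fin_A]) (auto simp: A_def split: split_indicator)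
    with le[OF A] show False by simp
  qed
  then show ?thesis using AE_space
  proof eventually_elim
    case (elim x)
    then show ?case by (cases "v x < u x") (auto simp: A_def not_less)
  qed
qed

text \<open>The Radon-Nikodym derivative is modified on a null set so that the bounds hold everywhere.\<close>

lemma obtain_density_between_exp:
  assumes M: "prob_space M" and N: "prob_space N" and sets: "sets N = sets M"
    and up: "\<forall>A\<in>sets M. measure N A \<le> exp e * measure M A"
    and lo: "\<forall>A\<in>sets M. measure M A \<le> exp e * measure N A"
  obtains q where "q \<in> borel_measurable M" "\<And>y. exp (- e) \<le> q y \<and> q y \<le> exp e"
    "\<And>h. h \<in> borel_measurable M \<Longrightarrow> (\<integral>\<^sup>+y. h y \<partial>N) = (\<integral>\<^sup>+y. ennreal (q y) * h y \<partial>M)"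
proof -
  interpret M: prob_space M by fact
  interpret N: prob_space N by fact
  have "1 \<le> exp e"
    using lo[rule_format, OF sets.top[of M]] M.prob_space N.prob_space sets_eq_imp_space_eq[OF sets]
    by simp
  then have e: "0 \<le> e" by simp
  have ac: "absolutely_continuous M N"
    unfolding absolutely_continuous_def
  proof
    fix A assume "A \<in> null_sets M"
    then have A: "A \<in> sets M" "measure M A = 0" by (auto simp: null_sets_def M.emeasure_eq_measure)
    then have "measure N A = 0" using up measure_nonneg[of N A] by (metis mult_zero_right order_antisym)
    then show "A \<in> null_sets N" using A sets by (auto simp: null_sets_def N.emeasure_eq_measure)
  qed
  define q where "q = RN_deriv M N"
  have q[measurable]: "q \<in> borel_measurable M" unfolding q_def by simp
  have emN: "emeasure N A = (\<integral>\<^sup>+x. q x * indicator A x \<partial>M)" if "A \<in> sets M" for A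
    using emeasure_density[OF q that] M.density_RN_deriv[OF ac sets] by (simp add: q_def)
  have "(\<integral>\<^sup>+x. q x \<partial>M) = 1"
    using emN[of "space M"] N.emeasure_space_1 sets_eq_imp_space_eq[OF sets] by simp
  then have q_fin: "(\<integral>\<^sup>+x. q x \<partial>M) \<noteq> \<infinity>" by simp
  have AE_upper: "AE x in M. q x \<le> ennreal (exp e)"
  proof (rule AE_le_if_nn_integral_indicator_le)
    show "(\<integral>\<^sup>+x. ennreal (exp e) \<partial>M) \<noteq> \<infinity>"
      using M.emeasure_space_1 by (simp add: ennreal_mult_eq_top_iff)
    fix A assume A: "A \<in> sets M"
    have "(\<integral>\<^sup>+x. q x * indicator A x \<partial>M) = ennreal (measure N A)"
      using emN[OF A] N.emeasure_eq_measure by simp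
    also have "\<dots> \<le> ennreal (exp e * measure M A)" using up A by (auto intro: ennreal_leI)
    also have "\<dots> = (\<integral>\<^sup>+x. ennreal (exp e) * indicator A x \<partial>M)"
      using A by (simp add: nn_integral_cmult_indicator M.emeasure_eq_measure ennreal_mult)
    finally show "(\<integral>\<^sup>+x. q x * indicator A x \<partial>M) \<le> (\<integral>\<^sup>+x. ennreal (exp e) * indicator A x \<partial>M)" .
  qed simp_all
  have AE_lower: "AE x in M. ennreal (exp (- e)) \<le> q x"
  proof (rule AE_le_if_nn_integral_indicator_le[OF _ _ q_fin])
    fix A assume A: "A \<in> sets M"
    have "(\<integral>\<^sup>+x. ennreal (exp (- e)) * indicator A x \<partial>M) = ennreal (exp (- e) * measure M A)"
      using A by (simp add: nn_integral_cmult_indicator M.emeasure_eq_measure ennreal_mult)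
    also have "\<dots> \<le> ennreal (measure N A)"
      using lo A by (intro ennreal_leI) (simp add: exp_minus field_simps)
    also have "\<dots> = (\<integral>\<^sup>+x. q x * indicator A x \<partial>M)"
      using emN[OF A] N.emeasure_eq_measure by simp
    finally show "(\<integral>\<^sup>+x. ennreal (exp (- e)) * indicator A x \<partial>M) \<le> (\<integral>\<^sup>+x. q x * indicator A x \<partial>M)" .
  qed simp_all
  define qr where
    "qr y = (if ennreal (exp (- e)) \<le> q y \<and> q y \<le> ennreal (exp e) then enn2real (q y) else 1)" for y
  have "qr \<in> borel_measurable M" unfolding qr_def by measurable
  moreover have "exp (- e) \<le> qr y \<and> qr y \<le> exp e" for y
  proof (cases "ennreal (exp (- e)) \<le> q y \<and> q y \<le> ennreal (exp e)")
    case True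
    then obtain x where "0 \<le> x" "q y = ennreal x" by (cases "q y") (auto simp: top_unique)
    then show ?thesis using True by (simp add: qr_def)
  next
    case False
    then have "qr y = 1" unfolding qr_def by (rule if_not_P)
    then show ?thesis using e by simp
  qed
  moreover have "(\<integral>\<^sup>+y. h y \<partial>N) = (\<integral>\<^sup>+y. ennreal (qr y) * h y \<partial>M)" if "h \<in> borel_measurable M" for h
  proof -
    have "AE y in M. ennreal (qr y) = q y"
      using AE_upper AE_lower
      by eventually_elim (auto simp: qr_def less_top[symmetric] top_unique intro!: ennreal_enn2real)
    then have "(\<integral>\<^sup>+y. q y * h y \<partial>M) = (\<integral>\<^sup>+y. ennreal (qr y) * h y \<partial>M)"
      by (intro nn_integral_cong_AE) auto
    then show ?thesis
      using M.RN_deriv_nn_integral[OF ac sets that] by (simp add: q_def)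
  qed
  ultimately show ?thesis using that by blast
qed

lemma sq_error_Est: "sq_error (Est x) G c = ennreal ((x - c)\<^sup>2)"
  unfolding sq_error_def by (simp add: nn_integral_return)

lemma sq_error_Ask:
  assumes "R (G i) \<in> space (prob_algebra Out)"
    and "(\<lambda>y. run (k y) G) \<in> Out \<rightarrow>\<^sub>M prob_algebra borel"
  shows "sq_error (Ask i Out R k) G c = (\<integral>\<^sup>+y. sq_error (k y) G c \<partial>R (G i))"
proof -
  have "sets (R (G i)) = sets Out" using assms(1) by (simp add: space_prob_algebra)
  then have K: "(\<lambda>y. run (k y) G) \<in> R (G i) \<rightarrow>\<^sub>M subprob_algebra borel"
    using measurable_prob_algebraD[OF assms(2)] by (simp cong: measurable_cong_sets)
  show ?thesis
    unfolding sq_error_def run.simps by (rule nn_integral_bind[OF _ K]) simp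
qed

lemma measurable_sq_error:
  assumes "(\<lambda>y. run (k y) G) \<in> Out \<rightarrow>\<^sub>M prob_algebra borel"
  shows "(\<lambda>y. sq_error (k y) G c) \<in> borel_measurable Out"
proof -
  have "(\<lambda>M. \<integral>\<^sup>+x. ennreal ((x - c)\<^sup>2) \<partial>M) \<in> borel_measurable (subprob_algebra borel)"
    by (rule nn_integral_measurable_subprob_algebra) simp
  from measurable_compose[OF measurable_prob_algebraD[OF assms] this]
  show ?thesis unfolding sq_error_def by simp
qed

text \<open>Bit \<open>j\<close> of \<open>S\<close> (an edge \<open>{2j, 2j+1}\<close>) is seen only by the users \<open>2j\<close> and \<open>2j+1\<close>.\<close>

definition hard_graph :: "nat \<Rightarrow> nat \<Rightarrow> nat set \<Rightarrow> nat \<Rightarrow> nat \<Rightarrow> bool" where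
  "hard_graph n m S u v \<longleftrightarrow>
     u < n \<and> v < n \<and> u \<noteq> v \<and> \<not> (u div 2 = v div 2 \<and> u div 2 < m \<and> u div 2 \<notin> S)"

lemma graph_on_hard_graph: "graph_on n (hard_graph n m S)"
  unfolding graph_on_def hard_graph_def by auto

lemma hard_graph_row: "hard_graph n m S u = hard_graph n m (S \<inter> {u div 2}) u"
  by (auto simp: fun_eq_iff hard_graph_def)

lemma neighboring_hard_graph_row:
  assumes "u div 2 < m" "2 * m \<le> n"
  shows "neighboring n (hard_graph n m {} u) (hard_graph n m {u div 2} u)"
proof -
  define q where "q = u div 2"
  have pair: "v div 2 = q \<longleftrightarrow> v = 2 * q \<or> v = 2 * q + 1" for v
    unfolding q_def by presburger
  have v_lt: "v div 2 = q \<Longrightarrow> v < n" for v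
    using assms unfolding q_def by linarith
  have "hard_graph n m {} u v \<noteq> hard_graph n m {q} u v \<longleftrightarrow> v div 2 = q \<and> v \<noteq> u" for v
    using v_lt[of v] v_lt[of u] assms(1) unfolding hard_graph_def q_def[symmetric] by auto
  then have "{v. hard_graph n m {} u v \<noteq> hard_graph n m {q} u v} = {2 * q, 2 * q + 1} - {u}"
    using pair by blast
  moreover have "card ({2 * q, 2 * q + 1} - {u}) = 1"
    using pair[of u, THEN iffD1, OF q_def[symmetric]] by (cases "u = 2 * q") auto
  ultimately have "card {v. hard_graph n m {} u v \<noteq> hard_graph n m {q} u v} = 1"
    by (simp only:)
  moreover have "\<forall>v\<ge>n. \<not> hard_graph n m {} u v \<and> \<not> hard_graph n m {q} u v"
    by (simp add: hard_graph_def)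
  ultimately show ?thesis
    unfolding neighboring_def q_def[symmetric] by blast
qed

lemma neighboring_sym: "neighboring n a a' \<Longrightarrow> neighboring n a' a"
  unfolding neighboring_def by (simp add: eq_commute[of "a' _"] conj_commute)

lemma obtain_query_density:
  assumes ldp: "edge_ldp n e Out R" and R: "\<forall>a. R a \<in> space (prob_algebra Out)"
    and "2 * m \<le> n" "0 \<le> e"
  obtains q where "q \<in> borel_measurable Out" "\<And>y. exp (- e) \<le> q y \<and> q y \<le> exp e"
    "\<And>S h. S \<subseteq> {..<m} \<Longrightarrow> h \<in> borel_measurable Out \<Longrightarrow>
       (\<integral>\<^sup>+y. h y \<partial>R (hard_graph n m S i))
         = (\<integral>\<^sup>+y. ennreal (if i div 2 \<in> S then q y else 1) * h y \<partial>R (hard_graph n m {} i))"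
proof (cases "i div 2 < m")
  case False
  have R_eq: "R (hard_graph n m S i) = R (hard_graph n m {} i)" if "S \<subseteq> {..<m}" for S
  proof -
    have "S \<inter> {i div 2} = {}" using False that by auto
    then show ?thesis using hard_graph_row[of n m S i] by simp
  qed
  show ?thesis
  proof (rule that[of "\<lambda>_. 1"])
    show "exp (- e) \<le> 1 \<and> 1 \<le> exp e" for y :: 'a using \<open>0 \<le> e\<close> by simp
    show "(\<integral>\<^sup>+y. h y \<partial>R (hard_graph n m S i))
        = (\<integral>\<^sup>+y. ennreal (if i div 2 \<in> S then 1 else 1) * h y \<partial>R (hard_graph n m {} i))"
      if "S \<subseteq> {..<m}" for S and h :: "'a \<Rightarrow> ennreal"
      using R_eq[OF that] by simp
  qed simp
next
  case True
  define Q0 Q1 where "Q0 = R (hard_graph n m {} i)" and "Q1 = R (hard_graph n m {i div 2} i)"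
  have sets: "sets Q0 = sets Out" "sets Q1 = sets Out" and Q: "prob_space Q0" "prob_space Q1"
    using R by (auto simp: Q0_def Q1_def space_prob_algebra)
  have nb: "neighboring n (hard_graph n m {} i) (hard_graph n m {i div 2} i)"
    using neighboring_hard_graph_row[OF True assms(3)] .
  have sets10: "sets Q1 = sets Q0" using sets by simp
  have up: "\<forall>A\<in>sets Q0. measure Q1 A \<le> exp e * measure Q0 A"
    using ldp neighboring_sym[OF nb] sets unfolding edge_ldp_def Q0_def Q1_def by auto
  have lo: "\<forall>A\<in>sets Q0. measure Q0 A \<le> exp e * measure Q1 A"
    using ldp nb sets unfolding edge_ldp_def Q0_def Q1_def by auto
  obtain q where q: "q \<in> borel_measurable Q0" "\<And>y. exp (- e) \<le> q y \<and> q y \<le> exp e"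
    and dens: "\<And>h. h \<in> borel_measurable Q0 \<Longrightarrow> (\<integral>\<^sup>+y. h y \<partial>Q1) = (\<integral>\<^sup>+y. ennreal (q y) * h y \<partial>Q0)"
    using obtain_density_between_exp[OF Q sets10 up lo] by blast
  have R_eq: "R (hard_graph n m S i) = (if i div 2 \<in> S then Q1 else Q0)" for S
    using hard_graph_row[of n m S i] hard_graph_row[of n m "{i div 2}" i]
    by (auto simp: Q0_def Q1_def)
  show ?thesis
  proof (rule that[of q])
    show "q \<in> borel_measurable Out" using q(1) sets by (simp cong: measurable_cong_sets)
    show "(\<integral>\<^sup>+y. h y \<partial>R (hard_graph n m S i))
        = (\<integral>\<^sup>+y. ennreal (if i div 2 \<in> S then q y else 1) * h y \<partial>R (hard_graph n m {} i))"
      if "h \<in> borel_measurable Out" for S and h :: "'a \<Rightarrow> ennreal"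
      using dens[of h] that sets by (simp add: R_eq Q0_def[symmetric] cong: measurable_cong_sets)
  qed (use q in auto)
qed

lemma prod_fun_upd_mult:
  assumes "finite S"
  shows "prod (r(j := r j * c)) S = prod r S * (if j \<in> S then c else 1)"
proof (cases "j \<in> S")
  case True
  have "prod (r(j := r j * c)) S = r j * c * prod (r(j := r j * c)) (S - {j})"
    using prod.remove[OF assms True, of "r(j := r j * c)"] by simp
  also have "prod (r(j := r j * c)) (S - {j}) = prod r (S - {j})"
    by (intro prod.cong) auto
  also have "r j * c * prod r (S - {j}) = prod r S * c"
    using prod.remove[OF assms True, of r] by (simp add: mult_ac)
  finally show ?thesis using True by simp
next
  case False
  then have "prod (r(j := r j * c)) S = prod r S" by (intro prod.cong) auto
  then show ?thesis using False by simp
qed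

lemma sum_Pow_nn_integral_tilt:
  fixes g :: "'a set \<Rightarrow> 'b \<Rightarrow> ennreal"
  assumes "finite J" "\<forall>j\<in>J. 0 \<le> r j" "\<And>y. 0 \<le> q y"
    and [measurable]: "q \<in> borel_measurable M" "\<And>S. g S \<in> borel_measurable M"
  shows "(\<Sum>S\<in>Pow J. ennreal (prod r S) * (\<integral>\<^sup>+y. ennreal (if j0 \<in> S then q y else 1) * g S y \<partial>M))
       = (\<integral>\<^sup>+y. (\<Sum>S\<in>Pow J. ennreal (prod (r(j0 := r j0 * q y)) S) * g S y) \<partial>M)"
proof -
  have "ennreal (prod (r(j0 := r j0 * q y)) S) * g S y
      = ennreal (prod r S) * (ennreal (if j0 \<in> S then q y else 1) * g S y)" if "S \<in> Pow J" for S y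
  proof -
    have "finite S" using that assms(1) finite_subset by blast
    moreover have "0 \<le> prod r S" using that assms(2) by (auto intro!: prod_nonneg)
    moreover have "0 \<le> (if j0 \<in> S then q y else 1)" using assms(3) by simp
    ultimately show ?thesis
      by (simp only: prod_fun_upd_mult ennreal_mult mult.assoc)
  qed
  then show ?thesis
    by (simp add: nn_integral_sum nn_integral_cmult)
qed

lemma ennreal_sum_mult:
  assumes "\<And>x. x \<in> A \<Longrightarrow> 0 \<le> f x" "\<And>x. x \<in> A \<Longrightarrow> 0 \<le> g x"
  shows "ennreal (\<Sum>x\<in>A. f x * g x) = (\<Sum>x\<in>A. ennreal (f x) * ennreal (g x))"
  using assms by (simp add: sum_ennreal[symmetric] ennreal_mult)

lemma ennreal_prod_one_plus_mult_eq_sum: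
  assumes "finite J" "\<forall>j\<in>J. 0 \<le> r j" "0 \<le> K"
  shows "ennreal ((\<Prod>j\<in>J. 1 + r j) * K) = (\<Sum>S\<in>Pow J. ennreal (prod r S) * ennreal K)"
  unfolding sum_Pow_prod_eq_prod_add_one[OF assms(1), symmetric] sum_distrib_right
  using assms(2,3) by (intro ennreal_sum_mult) (auto intro!: prod_nonneg)

text \<open>The Bayes risk of \<open>P\<close> on the hard graphs, \<open>S\<close> having prior weight \<open>prod r S\<close>.\<close>

definition weighted_risk :: "nat \<Rightarrow> nat \<Rightarrow> (nat set \<Rightarrow> real) \<Rightarrow> (nat \<Rightarrow> real) \<Rightarrow> 'o protocol \<Rightarrow> ennreal" where
  "weighted_risk n m f r P = (\<Sum>S\<in>Pow {..<m}. ennreal (prod r S) * sq_error P (hard_graph n m S) (f S))"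

lemma weighted_risk_Est:
  assumes "\<forall>j<m. 0 \<le> r j"
  shows "weighted_risk n m f r (Est x) = ennreal (\<Sum>S\<in>Pow {..<m}. prod r S * (x - f S)\<^sup>2)"
  unfolding weighted_risk_def sq_error_Est
  using assms by (intro ennreal_sum_mult[symmetric]) (auto intro!: prod_nonneg)

text \<open>Conditioning on the answer \<open>y\<close> of a query to user \<open>i\<close> multiplies the prior weight of
  coordinate \<open>i div 2\<close> by the density \<open>q y\<close>, and averaging over \<open>y\<close> restores the prior.\<close>

lemma obtain_weighted_risk_Ask:
  fixes f :: "nat set \<Rightarrow> real"
  assumes ldp: "edge_ldp n e Out R" and R: "\<forall>a. R a \<in> space (prob_algebra Out)"
    and k: "\<forall>G. (\<lambda>y. run (k y) G) \<in> Out \<rightarrow>\<^sub>M prob_algebra borel"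
    and "2 * m \<le> n" "0 \<le> e" and r: "\<forall>j\<in>{..<m}. 0 \<le> r j"
  obtains q Q where "\<And>y. exp (- e) \<le> q y \<and> q y \<le> exp e"
    "weighted_risk n m f r (Ask i Out R k)
       = (\<integral>\<^sup>+y. weighted_risk n m f (r(i div 2 := r (i div 2) * q y)) (k y) \<partial>Q)"
    "\<And>K. 0 \<le> K \<Longrightarrow> (\<integral>\<^sup>+y. ennreal ((\<Prod>j<m. 1 + (r(i div 2 := r (i div 2) * q y)) j) * K) \<partial>Q)
       = ennreal ((\<Prod>j<m. 1 + r j) * K)"
proof -
  obtain q where q_meas: "q \<in> borel_measurable Out"
    and q: "\<And>y. exp (- e) \<le> q y \<and> q y \<le> exp e"
    and tilt: "\<And>S h. S \<subseteq> {..<m} \<Longrightarrow> h \<in> borel_measurable Out \<Longrightarrow>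
       (\<integral>\<^sup>+y. h y \<partial>R (hard_graph n m S i))
         = (\<integral>\<^sup>+y. ennreal (if i div 2 \<in> S then q y else 1) * h y \<partial>R (hard_graph n m {} i))"
    using obtain_query_density[OF ldp R assms(4,5)] by blast
  define Q where "Q = R (hard_graph n m {} i)"
  define \<rho> where "\<rho> S y = ennreal (if i div 2 \<in> S then q y else 1)" for S y
  have sets_Q: "sets Q = sets Out"
    using R by (auto simp: Q_def space_prob_algebra)
  then have meas_Q: "h \<in> borel_measurable Q \<longleftrightarrow> h \<in> borel_measurable Out" for h :: "'a \<Rightarrow> ennreal"
    by (simp cong: measurable_cong_sets)
  have q_meas_Q[measurable]: "q \<in> borel_measurable Q"
    using q_meas sets_Q by (simp cong: measurable_cong_sets)
  have q0: "0 \<le> q y" for y using q[of y] exp_ge_zero order_trans by blast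
  have sq_meas: "(\<lambda>y. sq_error (k y) G c) \<in> borel_measurable Out" for G c
    using measurable_sq_error k by blast
  have sq_Ask: "sq_error (Ask i Out R k) (hard_graph n m S) (f S)
      = (\<integral>\<^sup>+y. \<rho> S y * sq_error (k y) (hard_graph n m S) (f S) \<partial>Q)" if "S \<in> Pow {..<m}" for S
  proof -
    have "sq_error (Ask i Out R k) (hard_graph n m S) (f S)
        = (\<integral>\<^sup>+y. sq_error (k y) (hard_graph n m S) (f S) \<partial>R (hard_graph n m S i))"
      by (rule sq_error_Ask) (use R k in auto)
    also have "\<dots> = (\<integral>\<^sup>+y. \<rho> S y * sq_error (k y) (hard_graph n m S) (f S) \<partial>Q)"
      unfolding \<rho>_def Q_def using that by (intro tilt sq_meas) auto
    finally show ?thesis .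
  qed
  have mass: "(\<integral>\<^sup>+y. \<rho> S y * ennreal K \<partial>Q) = ennreal K" if "S \<in> Pow {..<m}" for S K
  proof -
    have "(\<integral>\<^sup>+y. \<rho> S y \<partial>Q) = (\<integral>\<^sup>+y. 1 \<partial>R (hard_graph n m S i))"
      using tilt[of S "\<lambda>_. 1"] that by (simp add: \<rho>_def Q_def)
    also have "\<dots> = 1"
      using R prob_space.emeasure_space_1[of "R (hard_graph n m S i)"] by (simp add: space_prob_algebra)
    finally have "(\<integral>\<^sup>+y. \<rho> S y \<partial>Q) = 1" .
    moreover have "(\<lambda>y. \<rho> S y) \<in> borel_measurable Q" unfolding \<rho>_def by measurable
    ultimately show ?thesis by (simp add: nn_integral_multc)
  qed
  show ?thesis
  proof (rule that[OF q])
    show "weighted_risk n m f r (Ask i Out R k)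
        = (\<integral>\<^sup>+y. weighted_risk n m f (r(i div 2 := r (i div 2) * q y)) (k y) \<partial>Q)"
      unfolding weighted_risk_def \<rho>_def
      using r q0 q_meas_Q sq_meas meas_Q sq_Ask[unfolded \<rho>_def]
      by (simp add: sum_Pow_nn_integral_tilt)
    fix K :: real assume K: "0 \<le> K"
    have r': "\<forall>j\<in>{..<m}. 0 \<le> (r(i div 2 := r (i div 2) * q y)) j" for y
      using r q0 by simp
    have "(\<integral>\<^sup>+y. ennreal ((\<Prod>j<m. 1 + (r(i div 2 := r (i div 2) * q y)) j) * K) \<partial>Q)
        = (\<integral>\<^sup>+y. (\<Sum>S\<in>Pow {..<m}. ennreal (prod (r(i div 2 := r (i div 2) * q y)) S) * ennreal K) \<partial>Q)"
      using r' K by (intro nn_integral_cong ennreal_prod_one_plus_mult_eq_sum) auto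
    also have "\<dots> = (\<Sum>S\<in>Pow {..<m}. ennreal (prod r S) * (\<integral>\<^sup>+y. \<rho> S y * ennreal K \<partial>Q))"
      unfolding \<rho>_def using r q0 q_meas_Q by (intro sum_Pow_nn_integral_tilt[symmetric]) auto
    also have "\<dots> = ennreal ((\<Prod>j<m. 1 + r j) * K)"
      using ennreal_prod_one_plus_mult_eq_sum[OF _ r K] mass by simp
    finally show "(\<integral>\<^sup>+y. ennreal ((\<Prod>j<m. 1 + (r(i div 2 := r (i div 2) * q y)) j) * K) \<partial>Q)
        = ennreal ((\<Prod>j<m. 1 + r j) * K)" .
  qed
qed

lemma weighted_risk_ge:
  fixes f :: "nat set \<Rightarrow> real"
  assumes "valid n b P" "2 * m \<le> n" "0 \<le> N"
    and "\<forall>S\<subseteq>{..<m}. \<forall>j\<in>{..<m}-S. N \<le> f (insert j S) - f S"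
    and "\<forall>i. 0 \<le> b i" "likelihood_ratios_bounded \<epsilon> b m r"
  shows "ennreal ((\<Prod>j<m. 1 + r j) * (N\<^sup>2 * (m / (4 * exp (2 * \<epsilon>))))) \<le> weighted_risk n m f r P"
  using assms
proof (induction arbitrary: r rule: valid.induct)
  case (valid_Est n b x)
  then show ?case
    using likelihood_ratios_bounded_nonneg sum_Pow_prod_sq_dist_ge_spent
    by (simp add: weighted_risk_Est ennreal_leI)
next
  case (valid_Ask i n e b R Out k)
  define K where "K = N\<^sup>2 * (m / (4 * exp (2 * \<epsilon>)))"
  have "\<forall>j\<in>{..<m}. 0 \<le> r j"
    using likelihood_ratios_bounded_nonneg[OF valid_Ask.prems(5)] by simp
  then obtain q Q where q: "\<And>y. exp (- e) \<le> q y \<and> q y \<le> exp e"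
    and risk: "weighted_risk n m f r (Ask i Out R k)
       = (\<integral>\<^sup>+y. weighted_risk n m f (r(i div 2 := r (i div 2) * q y)) (k y) \<partial>Q)"
    and mass: "\<And>K. 0 \<le> K \<Longrightarrow> (\<integral>\<^sup>+y. ennreal ((\<Prod>j<m. 1 + (r(i div 2 := r (i div 2) * q y)) j) * K) \<partial>Q)
       = ennreal ((\<Prod>j<m. 1 + r j) * K)"
    using obtain_weighted_risk_Ask[of n e Out R k m r f i] valid_Ask.hyps valid_Ask.prems(1) by blast
  have "ennreal ((\<Prod>j<m. 1 + r j) * K)
      = (\<integral>\<^sup>+y. ennreal ((\<Prod>j<m. 1 + (r(i div 2 := r (i div 2) * q y)) j) * K) \<partial>Q)"
    using mass[of K] by (simp add: K_def)
  also have "\<dots> \<le> (\<integral>\<^sup>+y. weighted_risk n m f (r(i div 2 := r (i div 2) * q y)) (k y) \<partial>Q)"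
  proof (intro nn_integral_mono)
    fix y
    have "likelihood_ratios_bounded \<epsilon> (b(i := b i - e)) m (r(i div 2 := r (i div 2) * q y))"
      using likelihood_ratios_bounded_upd[OF valid_Ask.prems(5)] q by blast
    moreover have "\<forall>i'. 0 \<le> (b(i := b i - e)) i'" using valid_Ask.hyps(3) valid_Ask.prems(4) by simp
    ultimately show "ennreal ((\<Prod>j<m. 1 + (r(i div 2 := r (i div 2) * q y)) j) * K)
        \<le> weighted_risk n m f (r(i div 2 := r (i div 2) * q y)) (k y)"
      using valid_Ask.IH valid_Ask.prems(1-3) unfolding K_def by blast
  qed
  finally show ?case unfolding K_def risk .
qed

definition cycle_edges :: "nat \<Rightarrow> (nat \<Rightarrow> nat) \<Rightarrow> nat set set" where
  "cycle_edges k v = {{v a, v ((a + 1) mod k)} | a. a < k}"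

definition cycles :: "nat \<Rightarrow> nat \<Rightarrow> (nat \<Rightarrow> nat \<Rightarrow> bool) \<Rightarrow> nat set set set" where
  "cycles k n G = {cycle_edges k v | v.
     inj_on v {0..<k} \<and> (\<forall>a<k. v a < n) \<and> (\<forall>a<k. G (v a) (v ((a + 1) mod k)))}"

lemma cycle_count_eq_card_cycles: "cycle_count k n G = card (cycles k n G)"
  unfolding cycle_count_def cycles_def cycle_edges_def ..

lemma finite_cycles:
  assumes "0 < k"
  shows "finite (cycles k n G)"
proof (rule finite_subset)
  show "cycles k n G \<subseteq> Pow (Pow {..<n})"
  proof
    fix E assume "E \<in> cycles k n G"
    then obtain v where E: "E = cycle_edges k v" and v: "\<forall>a<k. v a < n"
      unfolding cycles_def by blast
    have "(a + 1) mod k < k" for a using assms by simp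
    then show "E \<in> Pow (Pow {..<n})" using v unfolding E cycle_edges_def by auto
  qed
qed simp

lemma cycles_mono: "(\<And>u v. G u v \<Longrightarrow> G' u v) \<Longrightarrow> cycles k n G \<subseteq> cycles k n G'"
  unfolding cycles_def by blast

lemma Union_cycle_edges:
  assumes "0 < k"
  shows "\<Union>(cycle_edges k v) = v ` {0..<k}"
proof
  have "(a + 1) mod k < k" for a using assms by simp
  then show "\<Union>(cycle_edges k v) \<subseteq> v ` {0..<k}"
    unfolding cycle_edges_def by auto
  show "v ` {0..<k} \<subseteq> \<Union>(cycle_edges k v)"
  proof
    fix x assume "x \<in> v ` {0..<k}"
    then obtain a where "a < k" "x = v a" by auto
    then have "x \<in> {v a, v ((a + 1) mod k)}" "{v a, v ((a + 1) mod k)} \<in> cycle_edges k v"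
      unfolding cycle_edges_def by blast+
    then show "x \<in> \<Union>(cycle_edges k v)" by blast
  qed
qed

lemma mult_add_eq_imp_eq:
  fixes x y x' y' t :: nat
  assumes "x * t + y = x' * t + y'" "y < t" "y' < t"
  shows "x = x' \<and> y = y'"
  using assms by (metis add.commute div_mult_self1 div_less less_nat_zero_code mod_mult_self1 mod_less plus_nat.add_0)

text \<open>The closed walk \<open>2j, 2j+1, v\<^sub>2, \<dots>, v\<^sub>k\<^sub>-\<^sub>1\<close> with \<open>v\<^sub>a\<close> taken from the \<open>(a-2)\<close>-th of
  \<open>k - 2\<close> disjoint blocks of size \<open>t\<close> above \<open>2m\<close>, namely its \<open>s (a-2)\<close>-th element.\<close>

definition pair_cycle :: "nat \<Rightarrow> nat \<Rightarrow> nat \<Rightarrow> (nat \<Rightarrow> nat) \<Rightarrow> nat \<Rightarrow> nat" where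
  "pair_cycle m t j s a = (if a = 0 then 2 * j else if a = 1 then 2 * j + 1 else 2 * m + (a - 2) * t + s (a - 2))"

lemma pair_cycle_lt_2m_iff:
  assumes "j < m"
  shows "pair_cycle m t j s a < 2 * m \<longleftrightarrow> a < 2"
  using assms by (auto simp: pair_cycle_def)

lemma pair_cycle_lt:
  assumes "s \<in> PiE {..<k - 2} (\<lambda>_. {..<t})" "a < k" "j < m" "2 * m + (k - 2) * t \<le> n"
  shows "pair_cycle m t j s a < n"
proof (cases "a < 2")
  case False
  have "s (a - 2) < t" using PiE_mem[OF assms(1), of "a - 2"] assms(2) False by simp
  then have "(a - 2) * t + s (a - 2) < (a - 2) * t + t" by simp
  also have "\<dots> = (a - 1) * t" using False by (simp add: algebra_simps)
  also have "\<dots> \<le> (k - 2) * t" using assms(2) by (intro mult_right_mono) auto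
  finally show ?thesis using assms(4) False by (simp add: pair_cycle_def)
qed (use assms(3,4) in \<open>auto simp: pair_cycle_def\<close>)

lemma inj_on_pair_cycle:
  assumes "s \<in> PiE {..<k - 2} (\<lambda>_. {..<t})" "j < m"
  shows "inj_on (pair_cycle m t j s) {0..<k}"
proof (rule inj_onI)
  fix a a' assume a: "a \<in> {0..<k}" and a': "a' \<in> {0..<k}"
    and eq: "pair_cycle m t j s a = pair_cycle m t j s a'"
  show "a = a'"
  proof (cases "a < 2")
    case True
    then have "a' < 2" using eq pair_cycle_lt_2m_iff[OF assms(2)] by metis
    with True eq show ?thesis by (auto simp: pair_cycle_def split: if_splits)
  next
    case False
    then have "\<not> a' < 2" using eq pair_cycle_lt_2m_iff[OF assms(2)] by metis
    moreover have "s (a - 2) < t" using PiE_mem[OF assms(1), of "a - 2"] a False by simp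
    moreover have "s (a' - 2) < t" using PiE_mem[OF assms(1), of "a' - 2"] a' calculation(1) by simp
    moreover have "(a - 2) * t + s (a - 2) = (a' - 2) * t + s (a' - 2)"
      using eq False calculation(1) by (simp add: pair_cycle_def)
    ultimately have "a - 2 = a' - 2"
      using mult_add_eq_imp_eq by blast
    then show ?thesis using False \<open>\<not> a' < 2\<close> by simp
  qed
qed

lemma cycle_edges_pair_cycle_mem_cycles:
  assumes "3 \<le> k" "s \<in> PiE {..<k - 2} (\<lambda>_. {..<t})" "j < m" "2 * m + (k - 2) * t \<le> n"
  shows "cycle_edges k (pair_cycle m t j s) \<in> cycles k n (hard_graph n m (insert j S))"
  unfolding cycles_def
proof (intro CollectI exI conjI)
  let ?v = "pair_cycle m t j s"
  show inj: "inj_on ?v {0..<k}" using inj_on_pair_cycle[OF assms(2,3)] .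
  show lt: "\<forall>a<k. ?v a < n" using pair_cycle_lt[OF assms(2) _ assms(3,4)] by blast
  show "\<forall>a<k. hard_graph n m (insert j S) (?v a) (?v ((a + 1) mod k))"
  proof (intro allI impI)
    fix a assume a: "a < k"
    have "(a + 1) mod k \<noteq> a"
    proof (cases "a + 1 < k")
      case False
      then have "a + 1 = k" using a by simp
      then show ?thesis using assms(1) by simp
    qed simp
    then have "?v a \<noteq> ?v ((a + 1) mod k)" using inj_onD[OF inj] a by fastforce
    moreover have "?v a < 2 * m \<Longrightarrow> ?v a div 2 = j"
      using pair_cycle_lt_2m_iff[OF assms(3)] by (auto simp: pair_cycle_def)
    ultimately show "hard_graph n m (insert j S) (?v a) (?v ((a + 1) mod k))"
      using lt a by (auto simp: hard_graph_def)
  qed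
qed (rule refl)

lemma pair_edge_mem_cycle_edges: "2 \<le> k \<Longrightarrow> {2 * j, 2 * j + 1} \<in> cycle_edges k (pair_cycle m t j s)"
  unfolding cycle_edges_def by (rule CollectI, rule exI[of _ 0]) (simp add: pair_cycle_def)

lemma pair_edge_not_mem_cycles:
  assumes "j < m" "j \<notin> S" "E \<in> cycles k n (hard_graph n m S)"
  shows "{2 * j, 2 * j + 1} \<notin> E"
proof
  assume "{2 * j, 2 * j + 1} \<in> E"
  then obtain u v where "{u, v} = {2 * j, 2 * j + 1}" "hard_graph n m S u v"
    using assms(3) unfolding cycles_def cycle_edges_def by blast
  then show False using assms(1,2) by (auto simp: doubleton_eq_iff hard_graph_def)
qed

lemma inj_on_cycle_edges_pair_cycle:
  assumes "3 \<le> k" "j < m"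
  shows "inj_on (\<lambda>s. cycle_edges k (pair_cycle m t j s)) (PiE {..<k - 2} (\<lambda>_. {..<t}))"
proof (rule inj_onI)
  fix s s' assume s: "s \<in> PiE {..<k - 2} (\<lambda>_. {..<t})" and s': "s' \<in> PiE {..<k - 2} (\<lambda>_. {..<t})"
    and eq: "cycle_edges k (pair_cycle m t j s) = cycle_edges k (pair_cycle m t j s')"
  have vertices: "pair_cycle m t j s ` {0..<k} = pair_cycle m t j s' ` {0..<k}"
    using arg_cong[OF eq, of Union] Union_cycle_edges assms(1) by simp
  show "s = s'"
  proof (rule PiE_ext[OF s s'])
    fix l assume l: "l \<in> {..<k - 2}"
    then have "pair_cycle m t j s (l + 2) \<in> pair_cycle m t j s' ` {0..<k}"
      using vertices by auto
    then obtain a where a: "a < k" and va: "pair_cycle m t j s (l + 2) = pair_cycle m t j s' a"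
      by auto
    have a2: "\<not> a < 2"
      using va pair_cycle_lt_2m_iff[OF assms(2), of t s "l + 2"] pair_cycle_lt_2m_iff[OF assms(2), of t s' a]
      by simp
    have "s l < t" using PiE_mem[OF s l] by simp
    moreover have "s' (a - 2) < t" using PiE_mem[OF s', of "a - 2"] a a2 by simp
    ultimately have "l = a - 2 \<and> s l = s' (a - 2)"
      using va a2 mult_add_eq_imp_eq[of l t "s l" "a - 2" "s' (a - 2)"] by (simp add: pair_cycle_def)
    then show "s l = s' l" by metis
  qed
qed

lemma card_cycles_hard_graph_insert:
  assumes "3 \<le> k" "j < m" "j \<notin> S" "2 * m + (k - 2) * t \<le> n"
  shows "card (cycles k n (hard_graph n m S)) + t ^ (k - 2) \<le> card (cycles k n (hard_graph n m (insert j S)))"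
proof -
  define T where "T = PiE {..<k - 2} (\<lambda>_. {..<t})"
  define new where "new = (\<lambda>s. cycle_edges k (pair_cycle m t j s)) ` T"
  have "hard_graph n m S u v \<Longrightarrow> hard_graph n m (insert j S) u v" for u v
    by (auto simp: hard_graph_def)
  then have sub: "cycles k n (hard_graph n m S) \<union> new \<subseteq> cycles k n (hard_graph n m (insert j S))"
    using cycles_mono cycle_edges_pair_cycle_mem_cycles[OF assms(1) _ assms(2,4)]
    unfolding new_def T_def by blast
  have "cycle_edges k (pair_cycle m t j s) \<notin> cycles k n (hard_graph n m S)" for s
    using pair_edge_not_mem_cycles[OF assms(2,3)] pair_edge_mem_cycle_edges[of k j m t s] assms(1)
    by auto
  then have disj: "cycles k n (hard_graph n m S) \<inter> new = {}"
    unfolding new_def by blast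
  have fin: "finite (cycles k n (hard_graph n m (insert j S)))"
    using assms(1) by (intro finite_cycles) simp
  have "card new = t ^ (k - 2)"
    unfolding new_def T_def
    using card_image[OF inj_on_cycle_edges_pair_cycle[OF assms(1,2)]] by (simp add: card_PiE)
  then have "card (cycles k n (hard_graph n m S)) + t ^ (k - 2)
      = card (cycles k n (hard_graph n m S) \<union> new)"
    using disj finite_subset[OF sub fin] by (simp add: card_Un_disjoint)
  also have "\<dots> \<le> card (cycles k n (hard_graph n m (insert j S)))"
    using card_mono[OF fin sub] .
  finally show ?thesis .
qed

lemma obtain_ge_if_card_mult_le_sum:
  fixes g :: "'a \<Rightarrow> ennreal"
  assumes "finite A" "A \<noteq> {}" "of_nat (card A) * K \<le> (\<Sum>x\<in>A. g x)"
  obtains x where "x \<in> A" "K \<le> g x"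
proof -
  have "Max (g ` A) \<in> g ` A" using assms(1,2) by simp
  then obtain x where x: "x \<in> A" "g x = Max (g ` A)" by (metis imageE)
  have "(\<Sum>y\<in>A. g y) \<le> (\<Sum>y\<in>A. g x)"
    using x assms(1) by (intro sum_mono) simp
  then have "of_nat (card A) * K \<le> of_nat (card A) * g x"
    using assms(3) by simp
  moreover have "of_nat (card A) \<noteq> (0 :: ennreal)" "of_nat (card A) \<noteq> (\<top> :: ennreal)"
    using assms(1,2) by simp_all
  ultimately show ?thesis
    using that x(1) ennreal_mult_le_mult_iff by blast
qed

lemma exists_graph_sq_error_ge:
  fixes P :: "'o protocol" and m t :: nat
  assumes "3 \<le> k" "0 \<le> \<epsilon>" "valid n (\<lambda>_. \<epsilon>) P" "2 * m + (k - 2) * t \<le> n"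
  obtains G where "graph_on n G"
    "ennreal ((real t ^ (k - 2))\<^sup>2 * (real m / (4 * exp (2 * \<epsilon>)))) \<le> sq_error P G (cycle_count k n G)"
proof -
  define f where "f S = real (cycle_count k n (hard_graph n m S))" for S
  have inc: "\<forall>S\<subseteq>{..<m}. \<forall>j\<in>{..<m}-S. real t ^ (k - 2) \<le> f (insert j S) - f S"
  proof (intro allI impI ballI)
    fix S j assume "S \<subseteq> {..<m}" "j \<in> {..<m} - S"
    then have "card (cycles k n (hard_graph n m S)) + t ^ (k - 2)
        \<le> card (cycles k n (hard_graph n m (insert j S)))"
      using card_cycles_hard_graph_insert[OF assms(1) _ _ assms(4)] by blast
    then have "real (card (cycles k n (hard_graph n m S))) + real t ^ (k - 2)
        \<le> real (card (cycles k n (hard_graph n m (insert j S))))"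
      by (metis of_nat_add of_nat_le_iff of_nat_power)
    then show "real t ^ (k - 2) \<le> f (insert j S) - f S"
      by (simp add: f_def cycle_count_eq_card_cycles)
  qed
  have uniform: "likelihood_ratios_bounded \<epsilon> (\<lambda>_. \<epsilon>) m (\<lambda>_. 1)"
    by (simp add: likelihood_ratios_bounded_def spent_on_pair_def)
  define K where "K = (real t ^ (k - 2))\<^sup>2 * (real m / (4 * exp (2 * \<epsilon>)))"
  from weighted_risk_ge[OF assms(3) _ _ inc _ uniform] assms(2,4)
  have "ennreal (2 ^ m * K) \<le> (\<Sum>S\<in>Pow {..<m}. sq_error P (hard_graph n m S) (f S))"
    by (simp add: weighted_risk_def K_def)
  moreover have "ennreal (2 ^ m * K) = of_nat (card (Pow {..<m})) * ennreal K"
    using ennreal_power[of "2 :: real" m] by (simp add: card_Pow ennreal_mult')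
  ultimately have average: "of_nat (card (Pow {..<m})) * ennreal K
      \<le> (\<Sum>S\<in>Pow {..<m}. sq_error P (hard_graph n m S) (f S))"
    by simp
  obtain S where "S \<in> Pow {..<m}" "ennreal K \<le> sq_error P (hard_graph n m S) (f S)"
    by (rule obtain_ge_if_card_mult_le_sum[OF _ _ average]) auto
  then show ?thesis
    using that[OF graph_on_hard_graph] by (simp add: f_def K_def)
qed

lemma quarter_split_bounds:
  fixes n k m t :: nat
  assumes "3 \<le> k" "4 * k \<le> n" and m_def: "m = n div 4" and t_def: "t = (n - 2 * m) div (k - 2)"
  shows "n \<le> 8 * m" "n \<le> 4 * (k - 2) * t" "2 * m + (k - 2) * t \<le> n"
proof -
  have n_mod: "4 * m + n mod 4 = n" "n mod 4 < 4" unfolding m_def by simp_all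
  then show "n \<le> 8 * m" using assms(1,2) by linarith
  have t_mod: "t * (k - 2) + (n - 2 * m) mod (k - 2) = n - 2 * m"
    unfolding t_def by (rule div_mult_mod_eq)
  moreover have "(n - 2 * m) mod (k - 2) < k - 2" using assms(1) by simp
  ultimately have "n \<le> 4 * (t * (k - 2))" using n_mod assms(1,2) by linarith
  then show "n \<le> 4 * (k - 2) * t" by (simp add: mult_ac)
  have "2 * m + t * (k - 2) \<le> n" using t_mod n_mod by linarith
  then show "2 * m + (k - 2) * t \<le> n" by (simp add: mult_ac)
qed

lemma cycle_count_sq_error_ge:
  fixes P :: "'o protocol"
  assumes "3 \<le> k" "0 \<le> \<epsilon>" "valid n (\<lambda>_. \<epsilon>) P" "4 * k \<le> n"
  obtains G where "graph_on n G"
    "ennreal ((1 / (4 * real (k - 2))) ^ (2 * (k - 2)) / (32 * exp (2 * \<epsilon>)) * real n ^ (2 * k - 3))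
       \<le> sq_error P G (cycle_count k n G)"
proof -
  define m where "m = n div 4"
  define t where "t = (n - 2 * m) div (k - 2)"
  note bounds = quarter_split_bounds[OF assms(1,4) m_def t_def]
  define \<alpha> where "\<alpha> = 1 / (4 * real (k - 2))"
  have "real n \<le> 4 * real (k - 2) * real t" using bounds(2) by (metis of_nat_le_iff of_nat_mult of_nat_numeral)
  then have "\<alpha> * real n \<le> real t" using assms(1) by (simp add: \<alpha>_def field_simps)
  then have "(\<alpha> * real n) ^ (2 * (k - 2)) \<le> (real t ^ (k - 2))\<^sup>2"
    by (simp add: \<alpha>_def power_mono flip: power_mult power_mult_distrib[of _ _ 2] mult.commute[of 2])
  moreover have "real n / 8 \<le> real m" using bounds(1) by simp
  ultimately have "(\<alpha> * real n) ^ (2 * (k - 2)) * (real n / 8 / (4 * exp (2 * \<epsilon>)))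
      \<le> (real t ^ (k - 2))\<^sup>2 * (real m / (4 * exp (2 * \<epsilon>)))"
    by (intro mult_mono divide_right_mono) (auto simp: \<alpha>_def)
  moreover have "(\<alpha> * real n) ^ (2 * (k - 2)) * (real n / 8 / (4 * exp (2 * \<epsilon>)))
      = \<alpha> ^ (2 * (k - 2)) / (32 * exp (2 * \<epsilon>)) * real n ^ (2 * k - 3)"
  proof -
    have "2 * k - 3 = Suc (2 * (k - 2))" using assms(1) by simp
    then show ?thesis by (simp add: power_mult_distrib field_simps)
  qed
  ultimately obtain G where "graph_on n G"
      "ennreal (\<alpha> ^ (2 * (k - 2)) / (32 * exp (2 * \<epsilon>)) * real n ^ (2 * k - 3))
         \<le> sq_error P G (cycle_count k n G)"
    using exists_graph_sq_error_ge[OF assms(1-3) bounds(3)] ennreal_leI order_trans by metis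
  then show ?thesis using that by (simp add: \<alpha>_def)
qed

lemma sq_mult_powr_eq:
  fixes n k :: nat and c :: real
  assumes "3 \<le> k"
  shows "(c * real n powr (real k - 3 / 2))\<^sup>2 = c\<^sup>2 * real n ^ (2 * k - 3)"
proof -
  have "(real n powr (real k - 3 / 2))\<^sup>2 = real n powr (2 * real k - 3)"
    by (simp add: power2_eq_square powr_add[symmetric])
  also have "\<dots> = real n ^ (2 * k - 3)"
    using assms by (cases "n = 0") (simp_all add: powr_realpow[symmetric] of_nat_diff)
  finally show ?thesis by (simp add: power_mult_distrib)
qed

lemma not_eventually_sq_error_le:
  fixes A :: "nat \<Rightarrow> 'o protocol"
  assumes "3 \<le> k" "0 \<le> \<epsilon>" "\<And>n. valid n (\<lambda>_. \<epsilon>) (A n)"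
  obtains c where "0 < c" "\<not> (\<forall>\<^sub>F n in sequentially. \<forall>G. graph_on n G \<longrightarrow>
      sq_error (A n) G (real (cycle_count k n G)) \<le> ennreal ((c * real n powr (real k - 3/2))\<^sup>2))"
proof -
  define C where "C = (1 / (4 * real (k - 2))) ^ (2 * (k - 2)) / (32 * exp (2 * \<epsilon>))"
  have C: "0 < C" using assms(1) by (simp add: C_def)
  have "\<not> (\<forall>\<^sub>F n in sequentially. \<forall>G. graph_on n G \<longrightarrow>
      sq_error (A n) G (real (cycle_count k n G)) \<le> ennreal ((sqrt C / 2 * real n powr (real k - 3/2))\<^sup>2))"
    (is "\<not> (\<forall>\<^sub>F n in sequentially. ?small n)")
  proof
    assume "\<forall>\<^sub>F n in sequentially. ?small n"
    then obtain n0 where n0: "\<And>n. n0 \<le> n \<Longrightarrow> ?small n"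
      unfolding eventually_sequentially by blast
    define n where "n = n0 + 4 * k"
    have "4 * k \<le> n" "n0 \<le> n" by (simp_all add: n_def)
    then obtain G where G: "graph_on n G" "ennreal (C * real n ^ (2 * k - 3)) \<le> sq_error (A n) G (cycle_count k n G)"
      using cycle_count_sq_error_ge[OF assms(1,2,3)] unfolding C_def by metis
    note G(2)
    also have "sq_error (A n) G (cycle_count k n G) \<le> ennreal ((sqrt C / 2 * real n powr (real k - 3/2))\<^sup>2)"
      using n0[OF \<open>n0 \<le> n\<close>] G(1) by blast
    also have "(sqrt C / 2 * real n powr (real k - 3/2))\<^sup>2 = C / 4 * real n ^ (2 * k - 3)"
      using sq_mult_powr_eq[OF assms(1)] C by (simp add: power_divide)
    finally have "C * real n ^ (2 * k - 3) \<le> C / 4 * real n ^ (2 * k - 3)"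
      using C by (simp add: ennreal_le_iff)
    moreover have "0 < real n ^ (2 * k - 3)" using assms(1) by (simp add: n_def)
    ultimately show False using C by simp
  qed
  moreover have "0 < sqrt C / 2" using C by simp
  ultimately show ?thesis using that by blast
qed

theorem theorem4:
  fixes k :: nat and \<epsilon> :: real
  assumes "k \<ge> 3" and "\<epsilon> > 0"
  shows "\<not> (\<exists>A :: nat \<Rightarrow> 'o protocol.
            (\<forall>n. eps_edge_ldp_alg \<epsilon> n (A n)) \<and>
            (\<forall>c>0. \<forall>\<^sub>F n in sequentially. \<forall>G. graph_on n G \<longrightarrow>
               sq_error (A n) G (real (cycle_count k n G))
                 \<le> ennreal ((c * real n powr (real k - 3/2))\<^sup>2)))"
  using not_eventually_sq_error_le[OF assms(1) less_imp_le[OF assms(2)]]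
  unfolding eps_edge_ldp_alg_def by blast

end
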